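(* Let $q\ge1$, $N\ge2$, and let $c_j\in\mathbb R$, $S_j,T_j\in\mathbb R^q$ ($1\le j\le N$) satisfy $$c_i-c_j+S_i\cdot(T_j-T_i)<0\qquad\forall\,1\le i\neq j\le N.$$ Then there exists a smooth convex function $g\colon\mathbb R^q\to\mathbb R$ such that: (i) for some $0<\epsilon<\min_{i\neq j}|T_i-T_j|$, $g(t)=c_j+S_j\cdot(t-T_j)$ for all $t\in\mathbb B_\epsilon(T_j)$ and all $1\le j\le N$; (ii) there is $M>1$ such that for each $k=1,2,\dots$ there is $L_k>0$ with $|D^kg(t)|\le L_k|t|^{1-k}$ for all $|t|\ge M$, where $D^kg$ is any $k$-th order partial derivative of $g$.
   Context: $\mathbb B_\epsilon(T)$ denotes the open ball in $\mathbb R^q$ of radius $\epsilon$ centered at $T$. *)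

theory Defs
  imports "HOL-Analysis.Analysis"
begin

definition partial_deriv :: "'q::finite \<Rightarrow> (real^'q \<Rightarrow> real) \<Rightarrow> real^'q \<Rightarrow> real" where
  "partial_deriv i f t = frechet_derivative f (at t) (axis i 1)"

text \<open>Iterated partial derivative D_{i1} D_{i2} ... D_{ik} f for the index list [i1,...,ik];
  a list of length k gives an arbitrary k-th order partial derivative.\<close>
fun hpartial :: "'q::finite list \<Rightarrow> (real^'q \<Rightarrow> real) \<Rightarrow> real^'q \<Rightarrow> real" where
  "hpartial [] f = f"
| "hpartial (i # is) f = partial_deriv i (hpartial is f)"

text \<open>Smooth (C-infinity) on all of real^'q: every iterated partial derivative exists and
  is (Frechet) differentiable everywhere; hence all partials of all orders are continuous.\<close>
definition smooth :: "(real^'q::finite \<Rightarrow> real) \<Rightarrow> bool" where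
  "smooth f \<longleftrightarrow> (\<forall>is. hpartial is f differentiable_on UNIV)"

end

(*
  Take the affine pieces l_j t = c_j + S_j \<bullet> (t - T_j) and a cone A sqrt (1 + |t|^2) - B.
  By hypothesis l_j exceeds every other l_i at T_j, hence by a uniform margin on a small ball
  around T_j; choosing A and B, the cone lies below all pieces on these balls and above all of
  them far out. The smoothed maximum b + \<delta> \<psi> ((a - b) / \<delta>), where \<psi> is a smooth convex
  function equal to max 0 u outside [-1, 1], is smooth, convex, nondecreasing in both arguments,
  and equals max a b once |a - b| \<ge> \<delta>. Folding it over the cone and l_1, ..., l_N gives a
  smooth convex g that is l_j near T_j and the cone far out, and the k-th derivatives of the
  cone decay like |t|^(1 - k).
*)
theory Submission
  imports Defs "HOL-Computational_Algebra.Polynomial"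
begin

(* C^\<infinity> defined coinductively, so that it makes sense on any normed space and closure
   properties can be proved by coinduction. *)
coinductive Cinf :: "('a::real_normed_vector \<Rightarrow> real) \<Rightarrow> bool" where
  "(\<And>x. f differentiable (at x)) \<Longrightarrow> (\<And>v. Cinf (\<lambda>x. frechet_derivative f (at x) v)) \<Longrightarrow> Cinf f"

lemma Cinf_differentiable: "Cinf f \<Longrightarrow> f differentiable (at x)"
  by (erule Cinf.cases) auto

lemma Cinf_frechet_derivative: "Cinf f \<Longrightarrow> Cinf (\<lambda>x. frechet_derivative f (at x) v)"
  by (erule Cinf.cases) auto

lemma Cinf_const: "Cinf (\<lambda>x::'a::real_normed_vector. c)"
proof (coinduction arbitrary: c rule: Cinf.coinduct)
  case (Cinf c)
  have "frechet_derivative (\<lambda>x::'a. c) (at x) = (\<lambda>h. 0)" for x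
    by (rule frechet_derivative_at[OF has_derivative_const, symmetric])
  then show ?case by auto
qed

lemma Cinf_linear: "bounded_linear f \<Longrightarrow> Cinf f"
proof (rule Cinf.intros)
  assume f: "bounded_linear f"
  then show "f differentiable (at x)" for x
    by (rule bounded_linear_imp_differentiable)
  have "frechet_derivative f (at x) = f" for x
    using frechet_derivative_at[OF bounded_linear_imp_has_derivative[OF f]] by simp
  then show "Cinf (\<lambda>x. frechet_derivative f (at x) v)" for v
    by (simp add: Cinf_const)
qed

(* The invariant for the coinduction in Cinf_closure_imp_Cinf: the derivatives of the
   generated functions are generated again. *)
inductive Cinf_closure :: "('a::real_normed_vector \<Rightarrow> real) \<Rightarrow> bool" where
  base: "Cinf f \<Longrightarrow> Cinf_closure f"
| add: "Cinf_closure u \<Longrightarrow> Cinf_closure w \<Longrightarrow> Cinf_closure (\<lambda>x. u x + w x)"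
| mult: "Cinf_closure u \<Longrightarrow> Cinf_closure w \<Longrightarrow> Cinf_closure (\<lambda>x. u x * w x)"
| compose: "Cinf (\<phi>::real \<Rightarrow> real) \<Longrightarrow> Cinf_closure u \<Longrightarrow> Cinf_closure (\<lambda>x. \<phi> (u x))"
| powr: "Cinf_closure u \<Longrightarrow> (\<And>x. u x > 0) \<Longrightarrow> Cinf_closure (\<lambda>x. u x powr r)"

lemma has_derivative_frechet_derivative_real:
  fixes \<phi> :: "real \<Rightarrow> real"
  assumes "\<phi> differentiable (at y)"
  shows "(\<phi> has_derivative (\<lambda>h. frechet_derivative \<phi> (at y) 1 * h)) (at y)"
proof -
  have D: "(\<phi> has_derivative frechet_derivative \<phi> (at y)) (at y)"
    using assms frechet_derivative_works by blast
  have "frechet_derivative \<phi> (at y) h = frechet_derivative \<phi> (at y) 1 * h" for h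
    using linear_scale[OF has_derivative_linear[OF D], of h 1] by (simp add: mult.commute)
  then have "frechet_derivative \<phi> (at y) = (\<lambda>h. frechet_derivative \<phi> (at y) 1 * h)"
    by (rule ext)
  with D show ?thesis
    by simp
qed

lemma Cinf_closure_has_derivative:
  assumes "Cinf_closure u"
  shows "\<exists>D. (\<forall>x. (u has_derivative D x) (at x)) \<and> (\<forall>v. Cinf_closure (\<lambda>x. D x v))"
  using assms
proof induction
  case (base f)
  show ?case
  proof (intro exI[of _ "\<lambda>x. frechet_derivative f (at x)"] conjI allI)
    show "(f has_derivative frechet_derivative f (at x)) (at x)" for x
      using Cinf_differentiable[OF base] frechet_derivative_works by blast
    show "Cinf_closure (\<lambda>x. frechet_derivative f (at x) v)" for v
      by (intro Cinf_closure.base Cinf_frechet_derivative base)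
  qed
next
  case (add u w)
  then obtain D1 D2 where "\<forall>x. (u has_derivative D1 x) (at x)" "\<forall>v. Cinf_closure (\<lambda>x. D1 x v)"
    and "\<forall>x. (w has_derivative D2 x) (at x)" "\<forall>v. Cinf_closure (\<lambda>x. D2 x v)" by blast
  then show ?case
    by (intro exI[of _ "\<lambda>x h. D1 x h + D2 x h"]) (auto intro: has_derivative_add Cinf_closure.add)
next
  case (mult u w)
  then obtain D1 D2 where D1: "\<forall>x. (u has_derivative D1 x) (at x)" "\<forall>v. Cinf_closure (\<lambda>x. D1 x v)"
    and D2: "\<forall>x. (w has_derivative D2 x) (at x)" "\<forall>v. Cinf_closure (\<lambda>x. D2 x v)" by blast
  have "((\<lambda>x. u x * w x) has_derivative (\<lambda>h. u x * D2 x h + D1 x h * w x)) (at x)" for x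
    using D1(1) D2(1) by (blast intro: has_derivative_mult)
  moreover have "Cinf_closure (\<lambda>x. u x * D2 x v + D1 x v * w x)" for v
    using D1(2) D2(2) mult.hyps
    by (intro Cinf_closure.add Cinf_closure.mult) blast+
  ultimately show ?case
    by (intro exI[of _ "\<lambda>x h. u x * D2 x h + D1 x h * w x"] conjI allI)
next
  case (compose \<phi> u)
  then obtain D where D: "\<forall>x. (u has_derivative D x) (at x)" "\<forall>v. Cinf_closure (\<lambda>x. D x v)" by blast
  define \<phi>' where "\<phi>' y = frechet_derivative \<phi> (at y) 1" for y
  have "((\<lambda>x. \<phi> (u x)) has_derivative (\<lambda>h. \<phi>' (u x) * D x h)) (at x)" for x
    unfolding \<phi>'_def
    by (rule has_derivative_compose[OF D(1)[rule_format]
          has_derivative_frechet_derivative_real[OF Cinf_differentiable[OF compose.hyps(1)]]])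
  moreover have "Cinf_closure (\<lambda>x. \<phi>' (u x) * D x v)" for v
    unfolding \<phi>'_def
    by (rule Cinf_closure.mult[OF Cinf_closure.compose[OF Cinf_frechet_derivative[OF compose.hyps(1)]
          compose.hyps(2)] D(2)[rule_format]])
  ultimately show ?case
    by (intro exI[of _ "\<lambda>x h. \<phi>' (u x) * D x h"] conjI allI)
next
  case (powr u r)
  then obtain D where D: "\<forall>x. (u has_derivative D x) (at x)" "\<forall>v. Cinf_closure (\<lambda>x. D x v)" by blast
  have "((\<lambda>x. u x powr r) has_derivative (\<lambda>h. r * u x powr (r - 1) * D x h)) (at x)" for x
  proof -
    have "((\<lambda>x. u x powr r) has_derivative
        (\<lambda>h. u x powr r * (0 * ln (u x) + D x h * r / u x))) (at x)"
      by (rule has_derivative_powr[OF D(1)[rule_format] has_derivative_const]) (use powr.hyps in auto)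
    moreover have "u x powr r * (0 * ln (u x) + D x h * r / u x) = r * u x powr (r - 1) * D x h" for h
      using powr.hyps(2)[of x] by (simp add: powr_diff field_simps)
    ultimately show ?thesis by simp
  qed
  moreover have "Cinf_closure (\<lambda>x. r * u x powr (r - 1) * D x v)" for v
    by (rule Cinf_closure.mult[OF Cinf_closure.mult[OF Cinf_closure.base[OF Cinf_const]
          Cinf_closure.powr[OF powr.hyps]] D(2)[rule_format]])
  ultimately show ?case
    by (intro exI[of _ "\<lambda>x h. r * u x powr (r - 1) * D x h"] conjI allI)
qed

lemma Cinf_closure_imp_Cinf: "Cinf_closure u \<Longrightarrow> Cinf u"
proof (coinduction arbitrary: u rule: Cinf.coinduct)
  case (Cinf u)
  from Cinf_closure_has_derivative[OF this] obtain D
    where D: "\<forall>x. (u has_derivative D x) (at x)" "\<forall>v. Cinf_closure (\<lambda>x. D x v)"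
    by blast
  have "frechet_derivative u (at x) = D x" for x
    by (rule frechet_derivative_at[OF D(1)[rule_format], symmetric])
  with D show ?case
    by (auto simp: differentiable_def)
qed

lemma Cinf_add: "Cinf u \<Longrightarrow> Cinf w \<Longrightarrow> Cinf (\<lambda>x. u x + w x)"
  by (rule Cinf_closure_imp_Cinf[OF Cinf_closure.add[OF Cinf_closure.base Cinf_closure.base]])

lemma Cinf_mult: "Cinf u \<Longrightarrow> Cinf w \<Longrightarrow> Cinf (\<lambda>x. u x * w x)"
  by (rule Cinf_closure_imp_Cinf[OF Cinf_closure.mult[OF Cinf_closure.base Cinf_closure.base]])

lemma Cinf_compose: "Cinf \<phi> \<Longrightarrow> Cinf u \<Longrightarrow> Cinf (\<lambda>x. \<phi> (u x))"
  by (rule Cinf_closure_imp_Cinf[OF Cinf_closure.compose[OF _ Cinf_closure.base]])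

lemma Cinf_powr: "Cinf u \<Longrightarrow> (\<And>x. u x > 0) \<Longrightarrow> Cinf (\<lambda>x. u x powr r)"
  by (rule Cinf_closure_imp_Cinf[OF Cinf_closure.powr[OF Cinf_closure.base]])

lemma Cinf_has_real_derivative:
  assumes "\<And>x. (f has_real_derivative f' x) (at x)" "Cinf f'"
  shows "Cinf f"
proof (rule Cinf.intros)
  show "f differentiable (at x)" for x
    using assms(1) real_differentiable_def by blast
  have "frechet_derivative f (at x) = (\<lambda>h. f' x * h)" for x
    by (rule frechet_derivative_at[OF assms(1)[unfolded has_field_derivative_def], symmetric])
  then show "Cinf (\<lambda>x. frechet_derivative f (at x) v)" for v
    using Cinf_mult[OF assms(2) Cinf_const] by simp
qed

lemma Cinf_imp_smooth:
  fixes f :: "real^'q::finite \<Rightarrow> real"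
  assumes "Cinf f"
  shows "smooth f"
proof -
  have "Cinf (hpartial is f)" for "is"
    by (induction "is")
      (use assms in \<open>auto simp: partial_deriv_def[abs_def] intro: Cinf_frechet_derivative\<close>)
  then show ?thesis
    unfolding smooth_def
    by (auto simp: differentiable_on_def intro: Cinf_differentiable differentiable_at_withinI)
qed

(* flat 1 is Cauchy's function exp (-1/x); the family is closed under differentiation
   (flat_has_real_derivative), which is what the coinduction in Cinf_flat needs. *)
definition flat :: "real poly \<Rightarrow> real \<Rightarrow> real" where
  "flat p x = (if x > 0 then poly p (1 / x) * exp (- (1 / x)) else 0)"

definition flat_dpoly :: "real poly \<Rightarrow> real poly" where
  "flat_dpoly p = [:0, 0, 1:] * (p - pderiv p)"

lemma poly_over_exp_tendsto_0: "((\<lambda>y. poly p y / exp y) \<longlongrightarrow> (0::real)) at_top"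
proof -
  have "((\<lambda>y. \<Sum>i\<le>degree p. coeff p i * (y ^ i / exp y)) \<longlongrightarrow> (\<Sum>i\<le>degree p. coeff p i * 0)) at_top"
    by (intro tendsto_intros tendsto_power_div_exp_0)
  then show ?thesis
    by (simp add: poly_altdef sum_divide_distrib)
qed

lemma flat_has_real_derivative_0: "(flat p has_real_derivative 0) (at 0)"
proof -
  have "((\<lambda>h. flat p h / h) \<longlongrightarrow> 0) (at 0)"
  proof (rule filterlim_split_at)
    have "\<forall>\<^sub>F h in at_left (0::real). flat p h / h = 0"
      using eventually_at_left_real[of "-1" 0] by (auto elim!: eventually_mono simp: flat_def)
    then show "((\<lambda>h. flat p h / h) \<longlongrightarrow> 0) (at_left 0)"
      by (rule tendsto_eventually)
  next
    have "\<forall>\<^sub>F y in at_top. poly ([:0, 1:] * p) y / exp y = flat p (inverse y) / inverse y"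
      using eventually_gt_at_top[of 0] by eventually_elim (simp add: flat_def exp_minus field_simps)
    with poly_over_exp_tendsto_0 have "((\<lambda>y. flat p (inverse y) / inverse y) \<longlongrightarrow> 0) at_top"
      by (rule Lim_transform_eventually)
    then show "((\<lambda>h. flat p h / h) \<longlongrightarrow> 0) (at_right 0)"
      by (simp add: filterlim_at_right_to_top)
  qed
  then show ?thesis
    by (simp add: DERIV_def flat_def)
qed

lemma flat_has_real_derivative: "(flat p has_real_derivative flat (flat_dpoly p) x) (at x)"
proof -
  consider "x > 0" | "x < 0" | "x = 0" by linarith
  then show ?thesis
  proof cases
    case 1
    have "((\<lambda>x. poly p (1 / x) * exp (- (1 / x))) has_real_derivative
        poly (pderiv p) (1 / x) * (- (1 / x\<^sup>2)) * exp (- (1 / x))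
          + poly p (1 / x) * (exp (- (1 / x)) * (1 / x\<^sup>2)))
        (at x)"
      using 1 by (auto intro!: derivative_eq_intros DERIV_chain2[OF poly_DERIV] simp: power2_eq_square)
    moreover have "poly (pderiv p) (1 / x) * (- (1 / x\<^sup>2)) * exp (- (1 / x))
        + poly p (1 / x) * (exp (- (1 / x)) * (1 / x\<^sup>2)) = flat (flat_dpoly p) x"
      using 1 by (simp add: flat_def flat_dpoly_def algebra_simps power2_eq_square)
    ultimately show ?thesis
      by (rule_tac has_field_derivative_transform_within_open[where S="{0<..}"])
        (use 1 in \<open>auto simp: flat_def\<close>)
  next
    case 2
    have "((\<lambda>x. 0) has_real_derivative 0) (at x)" by simp
    then show ?thesis
      by (rule_tac has_field_derivative_transform_within_open[where S="{..<0}"])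
        (use 2 in \<open>auto simp: flat_def\<close>)
  next
    case 3
    then show ?thesis
      using flat_has_real_derivative_0 by (simp add: flat_def)
  qed
qed

lemma Cinf_flat: "Cinf (flat p)"
proof (coinduction arbitrary: p rule: Cinf.coinduct)
  case (Cinf p)
  have "frechet_derivative (flat p) (at x) = (\<lambda>h. flat (flat_dpoly p) x * h)" for x
    using flat_has_real_derivative[unfolded has_field_derivative_def]
    by (rule frechet_derivative_at[symmetric])
  then have "(\<lambda>x. frechet_derivative (flat p) (at x) v) = flat (smult v (flat_dpoly p))" for v
    by (auto simp: flat_def)
  moreover have "flat p differentiable at x" for x
    using flat_has_real_derivative real_differentiable_def by blast
  ultimately show ?case by blast
qed

lemma flat_1: "flat 1 x = (if x > 0 then exp (- (1 / x)) else 0)"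
  by (simp add: flat_def)

lemma flat_1_nonneg: "flat 1 x \<ge> 0"
  by (simp add: flat_1)

lemma flat_1_pos: "x > 0 \<Longrightarrow> flat 1 x > 0"
  by (simp add: flat_1)

lemma flat_1_mono: "x \<le> y \<Longrightarrow> flat 1 x \<le> flat 1 y"
  by (auto simp: flat_1 divide_simps)

definition smooth_step :: "real \<Rightarrow> real" where
  "smooth_step u = flat 1 (1 + u) / (flat 1 (1 + u) + flat 1 (1 - u))"

lemma smooth_step_denominator_pos: "flat 1 (1 + u) + flat 1 (1 - u) > 0"
  using flat_1_pos[of "1 + u"] flat_1_pos[of "1 - u"] flat_1_nonneg[of "1 + u"] flat_1_nonneg[of "1 - u"]
  by (cases "u > 0") auto

lemma Cinf_smooth_step: "Cinf smooth_step"
proof -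
  have plus: "Cinf (\<lambda>u::real. 1 + u)" and minus: "Cinf (\<lambda>u::real. 1 + - u)"
    by (intro Cinf_add Cinf_const Cinf_linear bounded_linear_ident bounded_linear_minus)+
  have "Cinf (\<lambda>u. flat 1 (1 + u) * (flat 1 (1 + u) + flat 1 (1 + - u)) powr (-1))"
    using smooth_step_denominator_pos
    by (intro Cinf_mult Cinf_powr Cinf_add Cinf_compose[OF Cinf_flat] plus minus) simp
  moreover have "flat 1 (1 + u) * (flat 1 (1 + u) + flat 1 (1 + - u)) powr (-1) = smooth_step u" for u
    using smooth_step_denominator_pos[of u] by (simp add: smooth_step_def powr_minus divide_inverse)
  ultimately show ?thesis by simp
qed

lemma smooth_step_left: "u \<le> -1 \<Longrightarrow> smooth_step u = 0"
  by (simp add: smooth_step_def flat_1)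

lemma smooth_step_minus: "smooth_step (- u) = 1 - smooth_step u"
  using smooth_step_denominator_pos[of u] by (simp add: smooth_step_def field_simps)

lemma smooth_step_nonneg: "smooth_step u \<ge> 0"
  by (simp add: smooth_step_def flat_1_nonneg add_nonneg_nonneg)

lemma smooth_step_le_1: "smooth_step u \<le> 1"
  using smooth_step_denominator_pos[of u] flat_1_nonneg[of "1 - u"]
  by (simp add: smooth_step_def divide_simps)

lemma smooth_step_mono: "u \<le> v \<Longrightarrow> smooth_step u \<le> smooth_step v"
proof -
  assume "u \<le> v"
  then have "flat 1 (1 + u) * flat 1 (1 - v) \<le> flat 1 (1 + v) * flat 1 (1 - u)"
    by (intro mult_mono flat_1_mono flat_1_nonneg) auto
  then show ?thesis
    using smooth_step_denominator_pos[of u] smooth_step_denominator_pos[of v]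
    by (simp add: smooth_step_def divide_simps algebra_simps)
qed

(* The lower limit only has to lie below -1, so that -1 is an interior point of integration. *)
definition smooth_ramp :: "real \<Rightarrow> real" where
  "smooth_ramp u = integral {-2..u} smooth_step"

lemma continuous_on_smooth_step: "continuous_on A smooth_step"
  by (rule continuous_at_imp_continuous_on)
    (metis Cinf_differentiable[OF Cinf_smooth_step] differentiable_imp_continuous_within)

lemma smooth_ramp_left: "u \<le> -1 \<Longrightarrow> smooth_ramp u = 0"
  unfolding smooth_ramp_def by (subst integral_cong[of _ _ "\<lambda>_. 0"]) (auto simp: smooth_step_left)

lemma smooth_ramp_has_real_derivative: "(smooth_ramp has_real_derivative smooth_step x) (at x)"
proof (cases "x > -2")
  case True
  have "(smooth_ramp has_real_derivative smooth_step x) (at x within {-2..x+1})"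
    unfolding smooth_ramp_def[abs_def]
    by (rule integral_has_real_derivative[OF continuous_on_smooth_step]) (use True in simp)
  moreover have "x \<in> interior {-2..x+1}"
    using True by simp
  ultimately show ?thesis
    by (metis at_within_interior)
next
  case False
  have "(smooth_ramp has_real_derivative 0) (at x)"
    by (rule has_field_derivative_transform_within_open[OF DERIV_const, where S="{..<-1}"])
      (use False in \<open>auto simp: smooth_ramp_left\<close>)
  then show ?thesis
    using False smooth_step_left[of x] by simp
qed

lemma Cinf_smooth_ramp: "Cinf smooth_ramp"
  by (rule Cinf_has_real_derivative[OF smooth_ramp_has_real_derivative Cinf_smooth_step])

lemma smooth_ramp_minus: "smooth_ramp u - smooth_ramp (- u) = u"
proof -
  have "((\<lambda>u. smooth_ramp u - smooth_ramp (- u) - u) has_real_derivative 0) (at x)" for x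
  proof -
    have "((\<lambda>u. smooth_ramp u - smooth_ramp (- u) - u) has_real_derivative
        smooth_step x - smooth_step (- x) * (- 1) - 1) (at x)"
      by (intro derivative_intros smooth_ramp_has_real_derivative
          DERIV_chain2[OF smooth_ramp_has_real_derivative])
    then show ?thesis
      using smooth_step_minus[of x] by simp
  qed
  then have "smooth_ramp u - smooth_ramp (- u) - u = smooth_ramp 0 - smooth_ramp (- 0) - 0"
    by (intro DERIV_isconst_all) auto
  then show ?thesis by simp
qed

lemma smooth_ramp_right: "u \<ge> 1 \<Longrightarrow> smooth_ramp u = u"
  using smooth_ramp_minus[of u] smooth_ramp_left[of "- u"] by simp

lemma convex_on_smooth_ramp: "convex_on UNIV smooth_ramp"
  by (rule convex_on_realI[where f'=smooth_step])
    (auto intro: smooth_ramp_has_real_derivative smooth_step_mono)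

lemma smooth_ramp_mono: "u \<le> v \<Longrightarrow> smooth_ramp u \<le> smooth_ramp v"
  by (rule DERIV_nonneg_imp_nondecreasing[where f=smooth_ramp])
    (blast intro: smooth_ramp_has_real_derivative smooth_step_nonneg)+

lemma smooth_ramp_diff_antimono:
  assumes "u \<le> v"
  shows "smooth_ramp v - v \<le> smooth_ramp u - u"
proof (rule DERIV_nonpos_imp_nonincreasing[where f="\<lambda>x. smooth_ramp x - x", OF assms])
  fix x
  have "((\<lambda>x. smooth_ramp x - x) has_real_derivative (smooth_step x - 1)) (at x)"
    by (intro derivative_intros smooth_ramp_has_real_derivative)
  then show "\<exists>y. ((\<lambda>x. smooth_ramp x - x) has_real_derivative y) (at x) \<and> y \<le> 0"
    using smooth_step_le_1[of x] by auto
qed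

lemma smooth_ramp_le: "smooth_ramp u \<le> max 0 u + 1"
proof -
  consider "u \<le> -1" | "u \<ge> 1" | "-1 < u" "u < 1" by linarith
  then show ?thesis
  proof cases
    case 3
    then show ?thesis
      using smooth_ramp_mono[of u 1] smooth_ramp_right[of 1] by simp
  qed (auto simp: smooth_ramp_left smooth_ramp_right)
qed

definition smooth_max :: "real \<Rightarrow> real \<Rightarrow> real \<Rightarrow> real" where
  "smooth_max \<delta> a b = b + \<delta> * smooth_ramp ((a - b) / \<delta>)"

lemma smooth_max_eq_right: "\<delta> > 0 \<Longrightarrow> a - b \<le> -\<delta> \<Longrightarrow> smooth_max \<delta> a b = b"
  unfolding smooth_max_def by (subst smooth_ramp_left) (simp_all add: divide_simps)

lemma smooth_max_eq_left: "\<delta> > 0 \<Longrightarrow> a - b \<ge> \<delta> \<Longrightarrow> smooth_max \<delta> a b = a"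
  unfolding smooth_max_def by (subst smooth_ramp_right) (simp_all add: divide_simps)

lemma smooth_max_le: 
  assumes "\<delta> > 0"
  shows "smooth_max \<delta> a b \<le> max a b + \<delta>"
proof -
  have "\<delta> * smooth_ramp ((a - b) / \<delta>) \<le> \<delta> * (max 0 ((a - b) / \<delta>) + 1)"
    using smooth_ramp_le assms by (intro mult_left_mono) auto
  also have "\<dots> = max 0 (a - b) + \<delta>"
    using assms by (simp add: max_def divide_simps algebra_simps)
  finally show ?thesis
    unfolding smooth_max_def by linarith
qed

lemma smooth_max_mono:
  assumes "\<delta> > 0" "a \<le> a'" "b \<le> b'"
  shows "smooth_max \<delta> a b \<le> smooth_max \<delta> a' b'"
proof -
  have "smooth_max \<delta> a b \<le> smooth_max \<delta> a' b"
    unfolding smooth_max_def using assms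
    by (simp add: smooth_ramp_mono divide_right_mono)
  also have "\<dots> \<le> smooth_max \<delta> a' b'"
  proof -
    define p p' where "p = (a' - b) / \<delta>" and "p' = (a' - b') / \<delta>"
    have "smooth_ramp p - p \<le> smooth_ramp p' - p'"
      unfolding p_def p'_def using assms by (intro smooth_ramp_diff_antimono divide_right_mono) auto
    then have "\<delta> * (smooth_ramp p - p) \<le> \<delta> * (smooth_ramp p' - p')"
      using assms by (simp add: mult_left_mono)
    moreover have "\<delta> * p = a' - b" "\<delta> * p' = a' - b'"
      unfolding p_def p'_def using assms by simp_all
    ultimately show ?thesis
      unfolding smooth_max_def p_def[symmetric] p'_def[symmetric] by (simp add: right_diff_distrib)
  qed
  finally show ?thesis .
qed

lemma smooth_max_convex_combination:
  assumes "\<delta> > 0" "0 \<le> s" "s \<le> 1"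
  shows "smooth_max \<delta> ((1 - s) * a1 + s * a2) ((1 - s) * b1 + s * b2)
    \<le> (1 - s) * smooth_max \<delta> a1 b1 + s * smooth_max \<delta> a2 b2"
proof -
  have "((1 - s) * a1 + s * a2 - ((1 - s) * b1 + s * b2)) / \<delta>
      = (1 - s) *\<^sub>R ((a1 - b1) / \<delta>) + s *\<^sub>R ((a2 - b2) / \<delta>)"
    using assms(1) by (simp add: field_simps)
  also have "smooth_ramp \<dots> \<le> (1 - s) * smooth_ramp ((a1 - b1) / \<delta>) + s * smooth_ramp ((a2 - b2) / \<delta>)"
    using assms by (intro convex_onD[OF convex_on_smooth_ramp]) auto
  finally have "\<delta> * smooth_ramp (((1 - s) * a1 + s * a2 - ((1 - s) * b1 + s * b2)) / \<delta>)
      \<le> \<delta> * ((1 - s) * smooth_ramp ((a1 - b1) / \<delta>) + s * smooth_ramp ((a2 - b2) / \<delta>))"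
    using assms(1) by (rule mult_left_mono[OF _ less_imp_le])
  then show ?thesis
    unfolding smooth_max_def by (simp add: algebra_simps)
qed

lemma convex_on_smooth_max:
  fixes f g :: "'a::real_vector \<Rightarrow> real"
  assumes "\<delta> > 0" "convex_on UNIV f" "convex_on UNIV g"
  shows "convex_on UNIV (\<lambda>x. smooth_max \<delta> (f x) (g x))"
proof (rule convex_onI)
  fix s :: real and x y :: 'a
  assume s: "0 < s" "s < 1"
  let ?z = "(1 - s) *\<^sub>R x + s *\<^sub>R y"
  have "smooth_max \<delta> (f ?z) (g ?z) \<le> smooth_max \<delta> ((1 - s) * f x + s * f y) ((1 - s) * g x + s * g y)"
    using s assms by (intro smooth_max_mono convex_onD[of UNIV]) auto
  also have "\<dots> \<le> (1 - s) * smooth_max \<delta> (f x) (g x) + s * smooth_max \<delta> (f y) (g y)"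
    using s assms by (intro smooth_max_convex_combination) auto
  finally show "smooth_max \<delta> (f ?z) (g ?z)
      \<le> (1 - s) * smooth_max \<delta> (f x) (g x) + s * smooth_max \<delta> (f y) (g y)" .
qed simp

lemma Cinf_smooth_max:
  assumes "Cinf f" "Cinf g"
  shows "Cinf (\<lambda>x. smooth_max \<delta> (f x) (g x))"
proof -
  have "Cinf (\<lambda>x. g x + \<delta> * smooth_ramp (f x * (1 / \<delta>) + g x * (- 1 / \<delta>)))"
    by (intro Cinf_add Cinf_mult Cinf_compose[OF Cinf_smooth_ramp] Cinf_const assms)
  then show ?thesis
    by (simp add: smooth_max_def diff_divide_distrib)
qed

primrec smooth_max_fold :: "real \<Rightarrow> ('a \<Rightarrow> real) \<Rightarrow> (nat \<Rightarrow> 'a \<Rightarrow> real) \<Rightarrow> nat \<Rightarrow> 'a \<Rightarrow> real" where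
  "smooth_max_fold \<delta> f l 0 = f"
| "smooth_max_fold \<delta> f l (Suc k) = (\<lambda>t. smooth_max \<delta> (smooth_max_fold \<delta> f l k t) (l (Suc k) t))"

lemma Cinf_smooth_max_fold: "Cinf f \<Longrightarrow> (\<And>j. Cinf (l j)) \<Longrightarrow> Cinf (smooth_max_fold \<delta> f l k)"
  by (induction k) (simp_all add: Cinf_smooth_max)

lemma convex_on_smooth_max_fold:
  "\<delta> > 0 \<Longrightarrow> convex_on UNIV f \<Longrightarrow> (\<And>j. convex_on UNIV (l j)) \<Longrightarrow>
    convex_on UNIV (smooth_max_fold \<delta> f l k)"
  by (induction k) (simp_all add: convex_on_smooth_max)

lemma smooth_max_fold_eq_base:
  assumes "\<delta> > 0" "\<And>j. j \<in> {1..k} \<Longrightarrow> l j t + \<delta> \<le> f t"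
  shows "smooth_max_fold \<delta> f l k t = f t"
  using assms(2)
proof (induction k)
  case (Suc k)
  then have "smooth_max_fold \<delta> f l k t = f t" and "f t - l (Suc k) t \<ge> \<delta>"
    by force+
  then show ?case
    by (simp add: smooth_max_eq_left[OF assms(1)])
qed simp

lemma smooth_max_fold_le:
  assumes "\<delta> > 0" "f t \<le> a" "\<And>j. j \<in> {1..k} \<Longrightarrow> l j t \<le> a"
  shows "smooth_max_fold \<delta> f l k t \<le> a + real k * \<delta>"
  using assms(3)
proof (induction k)
  case (Suc k)
  then have "smooth_max_fold \<delta> f l k t \<le> a + real k * \<delta>" and "l (Suc k) t \<le> a"
    by force+
  moreover have "0 \<le> real k * \<delta>"
    using assms(1) by simp
  ultimately have max_le: "max (smooth_max_fold \<delta> f l k t) (l (Suc k) t) + \<delta> \<le> a + real (Suc k) * \<delta>"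
    by (simp add: algebra_simps)
  show ?case
    using order_trans[OF smooth_max_le[OF assms(1)] max_le] by simp
qed (use assms(2) in simp)

(* The margin (N + 1) \<delta> absorbs the overshoot of at most \<delta> per smoothed maximum. *)
lemma smooth_max_fold_eq_dominant:
  assumes "\<delta> > 0" "j \<in> {1..N}" "(real N + 1) * \<delta> \<le> \<mu>"
    and "f t \<le> l j t - \<mu>" "\<And>i. i \<in> {1..N} \<Longrightarrow> i \<noteq> j \<Longrightarrow> l i t \<le> l j t - \<mu>"
  shows "smooth_max_fold \<delta> f l N t = l j t"
proof -
  have "smooth_max_fold \<delta> f l k t = l j t" if "j \<le> k" "k \<le> N" for k
    using that
  proof (induction k)
    case (Suc k)
    have "(real k + 1) * \<delta> \<le> (real N + 1) * \<delta>"
      using Suc.prems assms(1) by (intro mult_right_mono) auto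
    then have k\<delta>: "real k * \<delta> + \<delta> \<le> \<mu>"
      using assms(3) by (simp add: algebra_simps)
    show ?case
    proof (cases "Suc k = j")
      case True
      have "smooth_max_fold \<delta> f l k t \<le> l j t - \<mu> + real k * \<delta>"
        using True assms by (intro smooth_max_fold_le) auto
      then have "smooth_max_fold \<delta> f l k t - l (Suc k) t \<le> - \<delta>"
        using True k\<delta> by simp
      then show ?thesis
        unfolding True[symmetric] by (simp add: smooth_max_eq_right[OF assms(1)])
    next
      case False
      then have "smooth_max_fold \<delta> f l k t = l j t"
        using Suc by simp
      moreover have "l (Suc k) t \<le> l j t - \<mu>"
        using False Suc.prems assms(2,5) by simp
      moreover have "0 \<le> real k * \<delta>"
        using assms(1) by simp
      ultimately show ?thesis
        using k\<delta> by (simp add: smooth_max_eq_left[OF assms(1)])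
    qed
  qed (use assms(2) in simp)
  then show ?thesis
    using assms(2) by simp
qed

(* Symbols of order d, i.e. every derivative of order k is O(|t|^(d - k)) for |t| \<ge> 1
   (symbol_bound, symbol_hpartial), generated by what the cone needs; zero has every order so
   that derivatives of constants stay in the class. *)
inductive symbol :: "real \<Rightarrow> ('a::real_inner \<Rightarrow> real) \<Rightarrow> bool" where
  zero: "symbol d (\<lambda>t. 0)"
| const: "symbol 0 (\<lambda>t. c)"
| inner: "symbol 1 (\<lambda>t. t \<bullet> v)"
| bracket_powr: "symbol (2 * r) (\<lambda>t. (1 + t \<bullet> t) powr r)"
| mult: "symbol d u \<Longrightarrow> symbol e w \<Longrightarrow> symbol (d + e) (\<lambda>t. u t * w t)"
| add: "symbol d u \<Longrightarrow> symbol d w \<Longrightarrow> symbol d (\<lambda>t. u t + w t)"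
| mono: "symbol d u \<Longrightarrow> d \<le> e \<Longrightarrow> symbol e u"

lemma one_plus_inner_powr_le:
  fixes t :: "'a::real_inner"
  assumes "norm t \<ge> 1"
  shows "(1 + t \<bullet> t) powr r \<le> (2 powr r + 1) * norm t powr (2 * r)"
proof -
  have t: "norm t > 0"
    using assms by linarith
  have tt: "t \<bullet> t = norm t powr 2"
    using t by (simp add: power2_norm_eq_inner[symmetric] powr_numeral)
  have sq: "(norm t powr 2) powr r = norm t powr (2 * r)" "(norm t ^ 2) powr r = norm t powr (2 * r)"
    using t by (simp_all only: powr_powr) (simp add: powr_powr flip: powr_numeral)
  show ?thesis
  proof (cases "r \<ge> 0")
    case True
    have "(1 + t \<bullet> t) powr r \<le> (2 * norm t powr 2) powr r"
      using assms True tt t by (intro powr_mono2) (auto simp: ge_one_powr_ge_zero)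
    also have "\<dots> = 2 powr r * norm t powr (2 * r)"
      by (simp add: powr_mult sq)
    also have "\<dots> \<le> (2 powr r + 1) * norm t powr (2 * r)"
      by (simp add: algebra_simps)
    finally show ?thesis .
  next
    case False
    have "(1 + t \<bullet> t) powr r \<le> (norm t powr 2) powr r"
      using False tt t by (intro powr_mono2') auto
    also have "\<dots> = norm t powr (2 * r)"
      by (rule sq(1))
    also have "\<dots> \<le> (2 powr r + 1) * norm t powr (2 * r)"
      by (simp add: algebra_simps)
    finally show ?thesis .
  qed
qed

lemma symbol_bound:
  assumes "symbol d u"
  shows "\<exists>C\<ge>0. \<forall>t. norm t \<ge> 1 \<longrightarrow> \<bar>u t\<bar> \<le> C * norm t powr d"
  using assms
proof induction
  case (const c)
  show ?case
    by (intro exI[of _ "\<bar>c\<bar>"]) auto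
next
  case (inner v)
  show ?case
    by (intro exI[of _ "norm v"]) (auto simp: Cauchy_Schwarz_ineq2 mult.commute)
next
  case (bracket_powr r)
  have "\<bar>(1 + t \<bullet> t) powr r\<bar> \<le> (2 powr r + 1) * norm t powr (2 * r)" if "norm t \<ge> 1" for t
    using one_plus_inner_powr_le[OF that] by simp
  then show ?case
    by (intro exI[of _ "2 powr r + 1"]) (auto intro: add_nonneg_nonneg)
next
  case (mult d u e w)
  then obtain C1 C2 where C: "C1 \<ge> 0" "C2 \<ge> 0"
    and bu: "\<forall>t. norm t \<ge> 1 \<longrightarrow> \<bar>u t\<bar> \<le> C1 * norm t powr d"
    and bw: "\<forall>t. norm t \<ge> 1 \<longrightarrow> \<bar>w t\<bar> \<le> C2 * norm t powr e" by blast
  have "\<bar>u t * w t\<bar> \<le> (C1 * norm t powr d) * (C2 * norm t powr e)" if "norm t \<ge> 1" for t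
    using bu bw C that by (simp add: abs_mult mult_mono)
  then show ?case
    using C by (intro exI[of _ "C1 * C2"]) (auto simp: powr_add mult_ac)
next
  case (add d u w)
  then obtain C1 C2 where C: "C1 \<ge> 0" "C2 \<ge> 0"
    and bu: "\<forall>t. norm t \<ge> 1 \<longrightarrow> \<bar>u t\<bar> \<le> C1 * norm t powr d"
    and bw: "\<forall>t. norm t \<ge> 1 \<longrightarrow> \<bar>w t\<bar> \<le> C2 * norm t powr d" by blast
  have "\<bar>u t + w t\<bar> \<le> (C1 + C2) * norm t powr d" if "norm t \<ge> 1" for t
    using bu[rule_format, OF that] bw[rule_format, OF that] abs_triangle_ineq[of "u t" "w t"]
    by (simp add: distrib_right)
  then show ?case
    using C by (intro exI[of _ "C1 + C2"]) auto
next
  case (mono d u e)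
  then obtain C where C: "C \<ge> 0" "\<forall>t. norm t \<ge> 1 \<longrightarrow> \<bar>u t\<bar> \<le> C * norm t powr d" by blast
  have "C * norm t powr d \<le> C * norm t powr e" if "norm t \<ge> 1" for t
    using that mono.hyps(2) C(1) by (intro mult_left_mono powr_mono) auto
  then show ?case
    using C by (intro exI[of _ C]) force
qed (auto intro: exI[of _ 0])

lemma symbol_has_derivative:
  assumes "symbol d u"
  shows "\<exists>D. (\<forall>x. (u has_derivative D x) (at x)) \<and> (\<forall>v. symbol (d - 1) (\<lambda>x. D x v))"
  using assms
proof induction
  case (zero d)
  show ?case
    by (intro exI[of _ "\<lambda>x h. 0"]) (simp add: symbol.zero)
next
  case (const c)
  show ?case
    by (intro exI[of _ "\<lambda>x h. 0"]) (simp add: symbol.zero)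
next
  case (inner v)
  have "((\<lambda>t. t \<bullet> v) has_derivative (\<lambda>h. h \<bullet> v)) (at x)" for x
    by (intro bounded_linear_imp_has_derivative bounded_linear_inner_left)
  moreover have "symbol (1 - 1) (\<lambda>x. w \<bullet> v)" for w
    using symbol.const[of "w \<bullet> v"] by simp
  ultimately show ?case
    by (intro exI[of _ "\<lambda>x h. h \<bullet> v"] conjI allI)
next
  case (bracket_powr r)
  have "((\<lambda>t. (1 + t \<bullet> t) powr r) has_derivative
      (\<lambda>h. (2 * r) * (1 + x \<bullet> x) powr (r - 1) * (x \<bullet> h))) (at x)" for x
  proof -
    have pos: "1 + x \<bullet> x > 0"
      by (simp add: add_pos_nonneg)
    have "((\<lambda>t. 1 + t \<bullet> t) has_derivative (\<lambda>h. x \<bullet> h + h \<bullet> x)) (at x)"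
      using has_derivative_add[OF has_derivative_const
          has_derivative_inner[OF has_derivative_ident has_derivative_ident]]
      by simp
    from has_derivative_powr[OF this has_derivative_const pos]
    have "((\<lambda>t. (1 + t \<bullet> t) powr r) has_derivative
        (\<lambda>h. (1 + x \<bullet> x) powr r * (0 * ln (1 + x \<bullet> x) + (x \<bullet> h + h \<bullet> x) * r / (1 + x \<bullet> x)))) (at x)"
      by simp
    moreover have "(1 + x \<bullet> x) powr r * (0 * ln (1 + x \<bullet> x) + (x \<bullet> h + h \<bullet> x) * r / (1 + x \<bullet> x))
        = (2 * r) * (1 + x \<bullet> x) powr (r - 1) * (x \<bullet> h)" for h
      using pos by (simp add: powr_diff inner_commute field_simps)
    ultimately show ?thesis by simp
  qed
  moreover have "symbol (2 * r - 1) (\<lambda>x. (2 * r) * (1 + x \<bullet> x) powr (r - 1) * (x \<bullet> v))" for v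
    by (rule symbol.mono[OF symbol.mult[OF symbol.mult[OF symbol.const symbol.bracket_powr] symbol.inner]])
      simp
  ultimately show ?case
    by (intro exI[of _ "\<lambda>x h. (2 * r) * (1 + x \<bullet> x) powr (r - 1) * (x \<bullet> h)"] conjI allI)
next
  case (mult d u e w)
  then obtain D1 D2 where D1: "\<forall>x. (u has_derivative D1 x) (at x)" "\<forall>v. symbol (d - 1) (\<lambda>x. D1 x v)"
    and D2: "\<forall>x. (w has_derivative D2 x) (at x)" "\<forall>v. symbol (e - 1) (\<lambda>x. D2 x v)" by blast
  have "((\<lambda>x. u x * w x) has_derivative (\<lambda>h. u x * D2 x h + D1 x h * w x)) (at x)" for x
    using D1(1) D2(1) by (blast intro: has_derivative_mult)
  moreover have "symbol (d + e - 1) (\<lambda>x. u x * D2 x v + D1 x v * w x)" for v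
  proof (rule symbol.add)
    show "symbol (d + e - 1) (\<lambda>x. u x * D2 x v)"
      by (rule symbol.mono[OF symbol.mult[OF mult.hyps(1) D2(2)[rule_format]]]) simp
    show "symbol (d + e - 1) (\<lambda>x. D1 x v * w x)"
      by (rule symbol.mono[OF symbol.mult[OF D1(2)[rule_format] mult.hyps(2)]]) simp
  qed
  ultimately show ?case
    by (intro exI[of _ "\<lambda>x h. u x * D2 x h + D1 x h * w x"] conjI allI)
next
  case (add d u w)
  then obtain D1 D2 where D1: "\<forall>x. (u has_derivative D1 x) (at x)" "\<forall>v. symbol (d - 1) (\<lambda>x. D1 x v)"
    and D2: "\<forall>x. (w has_derivative D2 x) (at x)" "\<forall>v. symbol (d - 1) (\<lambda>x. D2 x v)" by blast
  have "((\<lambda>x. u x + w x) has_derivative (\<lambda>h. D1 x h + D2 x h)) (at x)" for x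
    using D1(1) D2(1) by (blast intro: has_derivative_add)
  moreover have "symbol (d - 1) (\<lambda>x. D1 x v + D2 x v)" for v
    by (rule symbol.add[OF D1(2)[rule_format] D2(2)[rule_format]])
  ultimately show ?case
    by (intro exI[of _ "\<lambda>x h. D1 x h + D2 x h"] conjI allI)
next
  case (mono d u e)
  then obtain D where D: "\<forall>x. (u has_derivative D x) (at x)" "\<forall>v. symbol (d - 1) (\<lambda>x. D x v)"
    by blast
  have "symbol (e - 1) (\<lambda>x. D x v)" for v
    by (rule symbol.mono[OF D(2)[rule_format]]) (use mono.hyps in simp)
  with D(1) show ?case
    by blast
qed

lemma symbol_hpartial:
  fixes u :: "real^'q::finite \<Rightarrow> real"
  assumes "symbol d u"
  shows "symbol (d - real (length is)) (hpartial is u)"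
proof (induction "is")
  case (Cons i "is")
  then obtain D where D: "\<forall>x. (hpartial is u has_derivative D x) (at x)"
    "\<forall>v. symbol (d - real (length is) - 1) (\<lambda>x. D x v)"
    using symbol_has_derivative by blast
  have "frechet_derivative (hpartial is u) (at x) = D x" for x
    by (rule frechet_derivative_at[OF D(1)[rule_format], symmetric])
  then have "hpartial (i # is) u = (\<lambda>x. D x (axis i 1))"
    by (simp add: partial_deriv_def[abs_def])
  then show ?case
    using D(2) by (simp add: algebra_simps)
qed (use assms in simp)

lemma hpartial_cong_open:
  fixes f g :: "real^'q::finite \<Rightarrow> real"
  assumes "open U" "\<And>x. x \<in> U \<Longrightarrow> f x = g x" "x \<in> U"
  shows "hpartial is f x = hpartial is g x"
  using assms(3)
proof (induction "is" arbitrary: x)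
  case (Cons i "is")
  have "(hpartial is f has_derivative D) (at x) \<longleftrightarrow> (hpartial is g has_derivative D) (at x)" for D
    using has_derivative_transform_within_open[OF _ assms(1) Cons.prems,
        of "hpartial is f" D UNIV "hpartial is g"]
      has_derivative_transform_within_open[OF _ assms(1) Cons.prems,
        of "hpartial is g" D UNIV "hpartial is f"]
      Cons.IH by metis
  then show ?case
    by (simp add: partial_deriv_def frechet_derivative_def)
qed (use assms(2) in simp)

lemma hpartial_bound_outside_ball:
  fixes f g :: "real^'q::finite \<Rightarrow> real"
  assumes "symbol d f" "\<And>t. norm t > R \<Longrightarrow> g t = f t"
  shows "\<exists>M>1. \<forall>k. \<exists>L>0. \<forall>t. norm t \<ge> M \<longrightarrow>
    (\<forall>is. length is = k \<longrightarrow> \<bar>hpartial is g t\<bar> \<le> L * norm t powr (d - real k))"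
proof (rule exI[of _ "max 2 (R + 1)"], intro conjI allI)
  fix k
  obtain C where C: "\<And>is. C is \<ge> 0"
    "\<And>is t. norm t \<ge> 1 \<Longrightarrow> \<bar>hpartial is f t\<bar> \<le> C is * norm t powr (d - real (length is))"
    using symbol_bound[OF symbol_hpartial[OF assms(1)]] by metis
  define L where "L = 1 + (\<Sum>is | set is \<subseteq> UNIV \<and> length is = k. C is)"
  have "C is \<le> L" if "length is = k" for "is"
  proof -
    have "finite {is :: 'q list. set is \<subseteq> UNIV \<and> length is = k}"
      by (rule finite_lists_length_eq) simp
    then show ?thesis
      unfolding L_def using that C(1) by (smt (verit) member_le_sum mem_Collect_eq top_greatest)
  qed
  moreover have "hpartial is g t = hpartial is f t" if "norm t \<ge> max 2 (R + 1)" for t "is"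
    by (rule hpartial_cong_open[of "- cball 0 R"]) (use that assms(2) in auto)
  ultimately have "\<bar>hpartial is g t\<bar> \<le> L * norm t powr (d - real k)"
    if "norm t \<ge> max 2 (R + 1)" "length is = k" for t "is"
    using that C(2)[of t "is"] by (smt (verit) mult_right_mono powr_ge_zero)
  moreover have "L > 0"
    unfolding L_def using C(1) by (simp add: add_pos_nonneg sum_nonneg)
  ultimately show "\<exists>L>0. \<forall>t. norm t \<ge> max 2 (R + 1) \<longrightarrow>
      (\<forall>is. length is = k \<longrightarrow> \<bar>hpartial is g t\<bar> \<le> L * norm t powr (d - real k))"
    by blast
qed simp

lemma Cinf_inner_self: "Cinf (\<lambda>t::'a::real_inner. t \<bullet> t)"
proof (rule Cinf.intros)
  have D: "((\<lambda>t. t \<bullet> t) has_derivative (\<lambda>h. x \<bullet> h + h \<bullet> x)) (at x)" for x :: 'a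
    by (rule has_derivative_inner[OF has_derivative_ident has_derivative_ident])
  then show "(\<lambda>t. t \<bullet> t) differentiable at x" for x :: 'a
    unfolding differentiable_def by blast
  have "frechet_derivative (\<lambda>t. t \<bullet> t) (at x) = (\<lambda>h. x \<bullet> h + h \<bullet> x)" for x :: 'a
    by (rule frechet_derivative_at[OF D, symmetric])
  moreover have "Cinf (\<lambda>x::'a. x \<bullet> v + v \<bullet> x)" for v
    by (intro Cinf_linear bounded_linear_add bounded_linear_inner_left bounded_linear_inner_right
        bounded_linear_ident)
  ultimately show "Cinf (\<lambda>x. frechet_derivative (\<lambda>t. t \<bullet> t) (at x) v)" for v :: 'a
    by simp
qed

lemma convex_on_norm_Pair_1: "convex_on UNIV (\<lambda>t::'a::real_normed_vector. norm ((1::real), t))"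
proof (rule convex_onI)
  fix s :: real and x y :: 'a
  assume s: "0 < s" "s < 1"
  have "((1::real), (1 - s) *\<^sub>R x + s *\<^sub>R y) = (1 - s) *\<^sub>R ((1::real), x) + s *\<^sub>R ((1::real), y)"
    by (simp add: algebra_simps)
  then have "norm ((1::real), (1 - s) *\<^sub>R x + s *\<^sub>R y)
      \<le> norm ((1 - s) *\<^sub>R ((1::real), x)) + norm (s *\<^sub>R ((1::real), y))"
    by (metis norm_triangle_ineq)
  also have "\<dots> = (1 - s) * norm ((1::real), x) + s * norm ((1::real), y)"
    using s by (simp only: norm_scaleR abs_of_pos diff_gt_0_iff_gt)
  finally show "norm ((1::real), (1 - s) *\<^sub>R x + s *\<^sub>R y)
      \<le> (1 - s) * norm ((1::real), x) + s * norm ((1::real), y)" .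
qed simp

definition cone :: "real \<Rightarrow> real \<Rightarrow> 'a::real_inner \<Rightarrow> real" where
  "cone A B t = A * (1 + t \<bullet> t) powr (1 / 2) - B"

lemma one_plus_inner_powr_half: "(1 + t \<bullet> t) powr (1 / 2) = sqrt (1 + (norm t)\<^sup>2)"
  by (simp add: powr_half_sqrt add_nonneg_nonneg power2_norm_eq_inner)

lemma cone_bounds:
  assumes "A \<ge> 0"
  shows "A * norm t - B \<le> cone A B t" "cone A B t \<le> A * (1 + norm t) - B"
proof -
  have "norm t \<le> sqrt (1 + (norm t)\<^sup>2)"
    by (rule real_le_rsqrt) simp
  moreover have "sqrt (1 + (norm t)\<^sup>2) \<le> sqrt ((1 + norm t)\<^sup>2)"
    by (rule real_sqrt_le_mono) (simp add: power2_eq_square algebra_simps)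
  ultimately show "A * norm t - B \<le> cone A B t" "cone A B t \<le> A * (1 + norm t) - B"
    using assms by (simp_all add: cone_def one_plus_inner_powr_half mult_left_mono)
qed

lemma Cinf_cone: "Cinf (cone A B)"
proof -
  have "Cinf (\<lambda>t. A * (1 + t \<bullet> t) powr (1 / 2) + (- B))"
    by (intro Cinf_add Cinf_mult Cinf_powr Cinf_const Cinf_inner_self) (simp add: add_pos_nonneg)
  then show ?thesis
    by (simp add: cone_def[abs_def])
qed

lemma convex_on_cone:
  assumes "A \<ge> 0"
  shows "convex_on UNIV (cone A B :: 'a::real_inner \<Rightarrow> real)"
proof -
  have "(1 + t \<bullet> t) powr (1 / 2) = norm ((1::real), t)" for t :: 'a
    by (simp add: one_plus_inner_powr_half norm_Pair)
  then have "cone A B = (\<lambda>t::'a. A * norm ((1::real), t) - B)"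
    by (simp add: cone_def[abs_def])
  then show ?thesis
    using assms
    by (auto intro!: convex_on_diff convex_on_cmul convex_on_norm_Pair_1 simp: concave_on_const)
qed

lemma symbol_cone: "symbol 1 (cone A B)"
proof -
  have "symbol 1 (\<lambda>t. A * (1 + t \<bullet> t) powr (1 / 2) + - B)"
    by (rule symbol.add[OF symbol.mono[OF symbol.mult[OF symbol.const symbol.bracket_powr]]
          symbol.mono[OF symbol.const]]) simp_all
  then show ?thesis
    by (simp add: cone_def[abs_def])
qed

lemma finite_pos_lower_bound:
  fixes f :: "'a \<Rightarrow> real"
  assumes "finite A" "\<And>x. x \<in> A \<Longrightarrow> f x > 0"
  obtains \<gamma> where "\<gamma> > 0" "\<And>x. x \<in> A \<Longrightarrow> \<gamma> \<le> f x"
proof (cases "A = {}")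
  case False
  show ?thesis
    by (rule that[of "Min (f ` A)"]) (use assms False in auto)
qed (use that[of 1] in simp)

lemma Cinf_affine: "Cinf (\<lambda>t. c + s \<bullet> (t - T))"
proof -
  have "Cinf (\<lambda>t. c + (s \<bullet> t + - (s \<bullet> T)))"
    by (intro Cinf_add Cinf_const Cinf_linear bounded_linear_inner_right)
  then show ?thesis
    by (simp add: inner_diff_right)
qed

lemma convex_on_affine: "convex_on UNIV (\<lambda>t. c + s \<bullet> (t - T))"
  by (rule convex_onI) (simp_all add: inner_diff_right inner_add_right algebra_simps)

lemma affine_dominates_near_node:
  fixes S T :: "nat \<Rightarrow> 'a::real_inner"
  assumes "\<mu> + norm (S j - S i) * norm (t - T j) \<le> c j - c i - S i \<bullet> (T j - T i)"
  shows "c i + S i \<bullet> (t - T i) \<le> c j + S j \<bullet> (t - T j) - \<mu>"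
proof -
  have "c j + S j \<bullet> (t - T j) - (c i + S i \<bullet> (t - T i))
      = c j - c i - S i \<bullet> (T j - T i) + (S j - S i) \<bullet> (t - T j)"
    by (simp add: inner_diff_left inner_diff_right algebra_simps)
  moreover have "- (norm (S j - S i) * norm (t - T j)) \<le> (S j - S i) \<bullet> (t - T j)"
    using Cauchy_Schwarz_ineq2[of "S j - S i" "t - T j"] by linarith
  ultimately show ?thesis
    using assms by linarith
qed

lemma affine_nodes_separated:
  fixes S T :: "nat \<Rightarrow> 'a::real_inner"
  assumes "finite I" "\<And>i j. i \<in> I \<Longrightarrow> j \<in> I \<Longrightarrow> i \<noteq> j \<Longrightarrow> c i - c j + S i \<bullet> (T j - T i) < 0"
  obtains \<mu> \<epsilon> where "\<mu> > 0" "\<epsilon> > 0" "\<And>i j. i \<in> I \<Longrightarrow> j \<in> I \<Longrightarrow> i \<noteq> j \<Longrightarrow> \<epsilon> < norm (T i - T j)"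
    "\<And>i j t. i \<in> I \<Longrightarrow> j \<in> I \<Longrightarrow> i \<noteq> j \<Longrightarrow> t \<in> ball (T j) \<epsilon> \<Longrightarrow>
      c i + S i \<bullet> (t - T i) \<le> c j + S j \<bullet> (t - T j) - \<mu>"
proof -
  define P where "P = {(i, j). i \<in> I \<and> j \<in> I \<and> i \<noteq> j}"
  have P: "finite P"
    unfolding P_def by (rule finite_subset[of _ "I \<times> I"]) (use assms(1) in auto)
  have gap: "c j - c i - S i \<bullet> (T j - T i) > 0" and distinct: "T i \<noteq> T j" if "(i, j) \<in> P" for i j
    using that assms(2)[of i j] assms(2)[of j i] unfolding P_def by auto
  obtain \<gamma> where \<gamma>: "\<gamma> > 0" "\<And>i j. (i, j) \<in> P \<Longrightarrow> \<gamma> \<le> c j - c i - S i \<bullet> (T j - T i)"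
    by (rule finite_pos_lower_bound[OF P, where f="\<lambda>(i, j). c j - c i - S i \<bullet> (T j - T i)"])
      (use gap in auto)
  obtain \<epsilon> where \<epsilon>: "\<epsilon> > 0"
    "\<And>i j. (i, j) \<in> P \<Longrightarrow> \<epsilon> \<le> min (norm (T i - T j) / 2) (\<gamma> / (2 * (norm (S j - S i) + 1)))"
    by (rule finite_pos_lower_bound[OF P,
          where f="\<lambda>(i, j). min (norm (T i - T j) / 2) (\<gamma> / (2 * (norm (S j - S i) + 1)))"])
      (use \<gamma>(1) distinct in \<open>auto intro!: divide_pos_pos add_nonneg_pos\<close>)
  show ?thesis
  proof (rule that[of "\<gamma> / 2" \<epsilon>])
    fix i j assume "i \<in> I" "j \<in> I" "i \<noteq> j"
    then have ij: "(i, j) \<in> P"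
      by (simp add: P_def)
    have "0 < norm (T i - T j)"
      using distinct[OF ij] by simp
    with \<epsilon>(2)[OF ij] show "\<epsilon> < norm (T i - T j)"
      by linarith
    fix t assume "t \<in> ball (T j) \<epsilon>"
    then have "norm (S j - S i) * norm (t - T j) \<le> norm (S j - S i) * (\<gamma> / (2 * (norm (S j - S i) + 1)))"
      using \<epsilon>(2)[OF ij] by (intro mult_left_mono) (auto simp: dist_norm norm_minus_commute)
    also have "\<dots> \<le> \<gamma> / 2"
      using \<gamma>(1) by (simp add: divide_simps) (use norm_ge_zero[of "S j - S i"] in linarith)
    finally show "c i + S i \<bullet> (t - T i) \<le> c j + S j \<bullet> (t - T j) - \<gamma> / 2"
      using \<gamma>(2)[OF ij] by (intro affine_dominates_near_node) linarith
  qed (use \<gamma> \<epsilon> in auto)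
qed

lemma cone_separates_affine:
  fixes S T :: "nat \<Rightarrow> 'a::real_inner"
  assumes "finite I"
  obtains A B M where "A \<ge> 0"
    "\<And>j t. j \<in> I \<Longrightarrow> norm t \<le> R \<Longrightarrow> cone A B t \<le> c j + S j \<bullet> (t - T j) - \<mu>"
    "\<And>j t. j \<in> I \<Longrightarrow> norm t > M \<Longrightarrow> c j + S j \<bullet> (t - T j) + \<delta> \<le> cone A B t"
proof -
  define K where "K = (\<Sum>j\<in>I. norm (S j))"
  define C where "C = (\<Sum>j\<in>I. \<bar>c j\<bar> + norm (S j) * norm (T j))"
  have growth: "\<bar>c j + S j \<bullet> (t - T j)\<bar> \<le> K * norm t + C" if "j \<in> I" for j t
  proof -
    have "\<bar>c j + S j \<bullet> (t - T j)\<bar> \<le> norm (S j) * norm t + (\<bar>c j\<bar> + norm (S j) * norm (T j))"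
      using Cauchy_Schwarz_ineq2[of "S j" t] Cauchy_Schwarz_ineq2[of "S j" "T j"]
      by (auto simp: inner_diff_right abs_le_iff)
    also have "\<dots> \<le> K * norm t + C"
      unfolding K_def C_def using assms that
      by (intro add_mono mult_right_mono member_le_sum) (auto simp: add_nonneg_nonneg)
    finally show ?thesis .
  qed
  have K: "K \<ge> 0"
    unfolding K_def by (simp add: sum_nonneg)
  define B where "B = (K + 1) * (1 + R) + K * R + C + \<mu>"
  show ?thesis
  proof (rule that[of "K + 1" B "B + C + \<delta>"])
    fix j and t :: 'a
    assume j: "j \<in> I" and t: "norm t \<le> R"
    have "(K + 1) * (1 + norm t) \<le> (K + 1) * (1 + R)"
      using K t by (intro mult_left_mono) auto
    then have "cone (K + 1) B t \<le> (K + 1) * (1 + R) - B"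
      using cone_bounds(2)[where A="K + 1" and B=B and t=t] K by linarith
    moreover have "K * norm t \<le> K * R"
      by (rule mult_left_mono[OF t K])
    ultimately show "cone (K + 1) B t \<le> c j + S j \<bullet> (t - T j) - \<mu>"
      using growth[OF j, of t] unfolding B_def by linarith
  next
    fix j and t :: 'a
    assume j: "j \<in> I" and t: "norm t > B + C + \<delta>"
    show "c j + S j \<bullet> (t - T j) + \<delta> \<le> cone (K + 1) B t"
      using cone_bounds(1)[where A="K + 1" and B=B and t=t] growth[OF j, of t] K t
      by (simp add: algebra_simps)
  qed (use K in simp)
qed

lemma smooth_convex_affine_patch:
  fixes S T :: "nat \<Rightarrow> 'a::real_inner" and U :: "nat \<Rightarrow> 'a set"
  assumes "\<mu> > 0" "bounded (\<Union>j\<in>{1..N}. U j)"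
    and "\<And>i j t. i \<in> {1..N} \<Longrightarrow> j \<in> {1..N} \<Longrightarrow> i \<noteq> j \<Longrightarrow> t \<in> U j \<Longrightarrow>
      c i + S i \<bullet> (t - T i) \<le> c j + S j \<bullet> (t - T j) - \<mu>"
  obtains g f R where "Cinf g" "convex_on UNIV g"
    "\<And>j t. j \<in> {1..N} \<Longrightarrow> t \<in> U j \<Longrightarrow> g t = c j + S j \<bullet> (t - T j)"
    "symbol 1 f" "\<And>t. norm t > R \<Longrightarrow> g t = f t"
proof -
  define l where "l j t = c j + S j \<bullet> (t - T j)" for j t
  define \<delta> where "\<delta> = \<mu> / (real N + 1)"
  have \<delta>: "\<delta> > 0" "(real N + 1) * \<delta> \<le> \<mu>"
    using assms(1) by (simp_all add: \<delta>_def)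
  obtain R where R: "\<And>j t. j \<in> {1..N} \<Longrightarrow> t \<in> U j \<Longrightarrow> norm t \<le> R"
    using assms(2) unfolding bounded_iff by blast
  obtain A B M where AB: "A \<ge> 0"
    "\<And>j t. j \<in> {1..N} \<Longrightarrow> norm t \<le> R \<Longrightarrow> cone A B t \<le> l j t - \<mu>"
    "\<And>j t. j \<in> {1..N} \<Longrightarrow> norm t > M \<Longrightarrow> l j t + \<delta> \<le> cone A B t"
    unfolding l_def
    by (rule cone_separates_affine[where I="{1..N}" and R=R and c=c and S=S and T=T and \<mu>=\<mu> and \<delta>=\<delta>])
      auto
  define g where "g = smooth_max_fold \<delta> (cone A B) l N"
  show ?thesis
  proof (rule that[of g "cone A B" M])
    show "Cinf g"
      unfolding g_def l_def by (intro Cinf_smooth_max_fold Cinf_cone Cinf_affine)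
    show "convex_on UNIV g"
      unfolding g_def l_def by (intro convex_on_smooth_max_fold convex_on_cone convex_on_affine \<delta> AB)
    show "g t = c j + S j \<bullet> (t - T j)" if "j \<in> {1..N}" "t \<in> U j" for j t
      unfolding g_def using that
      by (subst smooth_max_fold_eq_dominant[OF \<delta>(1) that(1) \<delta>(2)])
        (auto simp: l_def intro!: AB(2)[unfolded l_def] R assms(3))
    show "g t = cone A B t" if "norm t > M" for t
      unfolding g_def using that by (intro smooth_max_fold_eq_base \<delta> AB(3)) auto
  qed (rule symbol_cone)
qed

theorem lemma6p1:
  fixes N :: nat and c :: "nat \<Rightarrow> real" and S T :: "nat \<Rightarrow> real^'q::finite"
  assumes "N \<ge> 2"
    and "\<And>i j. i \<in> {1..N} \<Longrightarrow> j \<in> {1..N} \<Longrightarrow> i \<noteq> j \<Longrightarrow>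
           c i - c j + S i \<bullet> (T j - T i) < 0"
  shows "\<exists>g :: real^'q \<Rightarrow> real. smooth g \<and> convex_on UNIV g \<and>
     (\<exists>\<epsilon>>0. \<epsilon> < Min {norm (T i - T j) | i j. i \<in> {1..N} \<and> j \<in> {1..N} \<and> i \<noteq> j} \<and>
        (\<forall>j\<in>{1..N}. \<forall>t\<in>ball (T j) \<epsilon>. g t = c j + S j \<bullet> (t - T j))) \<and>
     (\<exists>M>1. \<forall>k::nat\<ge>1. \<exists>L>0. \<forall>t. norm t \<ge> M \<longrightarrow>
        (\<forall>is. length is = k \<longrightarrow> \<bar>hpartial is g t\<bar> \<le> L * norm t powr (1 - real k)))"
proof -
  obtain \<mu> \<epsilon> where \<mu>: "\<mu> > 0" and \<epsilon>: "\<epsilon> > 0"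
    and \<epsilon>_dist: "\<And>i j. i \<in> {1..N} \<Longrightarrow> j \<in> {1..N} \<Longrightarrow> i \<noteq> j \<Longrightarrow> \<epsilon> < norm (T i - T j)"
    and dominant: "\<And>i j t. i \<in> {1..N} \<Longrightarrow> j \<in> {1..N} \<Longrightarrow> i \<noteq> j \<Longrightarrow> t \<in> ball (T j) \<epsilon> \<Longrightarrow>
      c i + S i \<bullet> (t - T i) \<le> c j + S j \<bullet> (t - T j) - \<mu>"
    using affine_nodes_separated[of "{1..N}" c S T] assms(2) by blast
  obtain g f R where "Cinf g" "convex_on UNIV g"
    and near: "\<And>j t. j \<in> {1..N} \<Longrightarrow> t \<in> ball (T j) \<epsilon> \<Longrightarrow> g t = c j + S j \<bullet> (t - T j)"
    and "symbol 1 f" "\<And>t. norm t > R \<Longrightarrow> g t = f t"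
    by (rule smooth_convex_affine_patch[where U="\<lambda>j. ball (T j) \<epsilon>", OF \<mu> _ dominant]) auto
  have "\<epsilon> < Min {norm (T i - T j) | i j. i \<in> {1..N} \<and> j \<in> {1..N} \<and> i \<noteq> j}" (is "_ < Min ?D")
  proof (subst Min_gr_iff)
    show "finite ?D"
      by (rule finite_subset[of _ "(\<lambda>(i, j). norm (T i - T j)) ` ({1..N} \<times> {1..N})"]) auto
    have "norm (T 1 - T 2) \<in> ?D"
      using assms(1) by force
    then show "?D \<noteq> {}"
      by blast
  qed (use \<epsilon>_dist in auto)
  moreover obtain M where "M > 1" "\<forall>k. \<exists>L>0. \<forall>t. norm t \<ge> M \<longrightarrow>
      (\<forall>is. length is = k \<longrightarrow> \<bar>hpartial is g t\<bar> \<le> L * norm t powr (1 - real k))"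
    using hpartial_bound_outside_ball[OF \<open>symbol 1 f\<close>] \<open>\<And>t. norm t > R \<Longrightarrow> g t = f t\<close> by blast
  ultimately show ?thesis
    using Cinf_imp_smooth[OF \<open>Cinf g\<close>] \<open>convex_on UNIV g\<close> \<epsilon> near by blast
qed

end
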